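(* Let $n_1<n_2<n_3$ be positive integers with $\gcd(n_1,n_2,n_3)=1$ minimally generating a nonsymmetric numerical semigroup $S$, with $\gcd(\delta_1,\delta_3)=1$. Let $\mathbf x\in\{\boldsymbol\lambda,\boldsymbol\mu\}$ and let $1\le i\le\max\{\delta_1,\delta_3\}$ be such that the B\'ezout couple $\mathbf x_i$ (of type $\mathbf x$) is reducible. Then there exists a positive integer $l<i$ such that $\tau_{\mathbf x_l}^-\le\tau_{\mathbf x_i}^-$ (componentwise), where $\mathbf x_l$ is the B\'ezout couple of $l$ of the same type.
   Context: $S=\langle n_1,n_2,n_3\rangle$; minimally generated means no $n_i$ lies in the submonoid generated by the other two; $S$ is symmetric if, with $F=\max(\mathbb Z\setminus S)$, $x\in\mathbb Z\setminus S$ implies $F-x\in S$. For $\{i,j,k\}=\{1,2,3\}$, $c_i=\min\{c\in\mathbb Z^+: cn_i\in\langle n_j,n_k\rangle\}$ and, $S$ being nonsymmetric, $r_{ij},r_{ik}$ are the unique positive integers with $c_in_i=r_{ij}n_j+r_{ik}n_k$; moreover $c_i=r_{ji}+r_{ki}$. Set $\delta_1=c_1-r_{12}-r_{13}>0$, $\delta_3=r_{31}+r_{32}-c_3>0$, $\mathbf v_1=(c_1,-r_{12},-r_{13})$, $\mathbf v_3=(r_{31},r_{32},-c_3)$. For $i\in\{1,\ldots,\max\{\delta_1,\delta_3\}\}$: $\boldsymbol\lambda_i$ is the unique $(a,b)\in\mathbb Z^2$ with $a\delta_1+b\delta_3=i$, $0<b\le\delta_1$; $\boldsymbol\mu_i$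 is the unique $(a,b)$ with $a\delta_1+b\delta_3=i$, $0<a\le\delta_3$. $\boldsymbol\lambda_i$ is reducible if $\boldsymbol\lambda_i=\boldsymbol\lambda_j+\boldsymbol\lambda_k$ for some $j,k\in\{1,\ldots,\max\{\delta_1,\delta_3\}\}$, and similarly for $\boldsymbol\mu_i$. For $(a,b)\in\mathbb Z^2$, $\tau_{(a,b)}=a\mathbf v_1+b\mathbf v_3\in\mathbb Z^3$. For $\mathbf z\in\mathbb Z^3$, $\mathbf z^+,\mathbf z^-\in\mathbb N^3$ are the unique vectors with $\mathbf z=\mathbf z^+-\mathbf z^-$ and $\mathbf z^+\cdot\mathbf z^-=0$. *)

theory Defs
  imports Main
begin

definition sgp3 :: "nat \<Rightarrow> nat \<Rightarrow> nat \<Rightarrow> int set" where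
  "sgp3 n1 n2 n3 = {int (a*n1 + b*n2 + c*n3) | a b c. True}"

definition mon2 :: "nat \<Rightarrow> nat \<Rightarrow> nat set" where
  "mon2 nj nk = {a*nj + b*nk | a b. True}"

definition min_generated :: "nat \<Rightarrow> nat \<Rightarrow> nat \<Rightarrow> bool" where
  "min_generated n1 n2 n3 \<longleftrightarrow>
     n1 \<notin> mon2 n2 n3 \<and> n2 \<notin> mon2 n1 n3 \<and> n3 \<notin> mon2 n1 n2"

definition frob :: "int set \<Rightarrow> int" where
  "frob S = (GREATEST x. x \<notin> S)"

definition symmetric_sg :: "int set \<Rightarrow> bool" where
  "symmetric_sg S \<longleftrightarrow> (\<forall>x. x \<notin> S \<longrightarrow> frob S - x \<in> S)"

definition cc :: "nat \<Rightarrow> nat \<Rightarrow> nat \<Rightarrow> nat" where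
  "cc ni nj nk = (LEAST c. c > 0 \<and> c * ni \<in> mon2 nj nk)"

definition rr :: "nat \<Rightarrow> nat \<Rightarrow> nat \<Rightarrow> nat \<times> nat" where
  "rr ni nj nk = (THE (p, q). p > 0 \<and> q > 0 \<and> cc ni nj nk * ni = p * nj + q * nk)"

definition c1 :: "nat \<Rightarrow> nat \<Rightarrow> nat \<Rightarrow> int" where
  "c1 n1 n2 n3 = int (cc n1 n2 n3)"
definition r12 :: "nat \<Rightarrow> nat \<Rightarrow> nat \<Rightarrow> int" where
  "r12 n1 n2 n3 = int (fst (rr n1 n2 n3))"
definition r13 :: "nat \<Rightarrow> nat \<Rightarrow> nat \<Rightarrow> int" where
  "r13 n1 n2 n3 = int (snd (rr n1 n2 n3))"
definition c3 :: "nat \<Rightarrow> nat \<Rightarrow> nat \<Rightarrow> int" where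
  "c3 n1 n2 n3 = int (cc n3 n1 n2)"
definition r31 :: "nat \<Rightarrow> nat \<Rightarrow> nat \<Rightarrow> int" where
  "r31 n1 n2 n3 = int (fst (rr n3 n1 n2))"
definition r32 :: "nat \<Rightarrow> nat \<Rightarrow> nat \<Rightarrow> int" where
  "r32 n1 n2 n3 = int (snd (rr n3 n1 n2))"

definition delta1 :: "nat \<Rightarrow> nat \<Rightarrow> nat \<Rightarrow> int" where
  "delta1 n1 n2 n3 = c1 n1 n2 n3 - r12 n1 n2 n3 - r13 n1 n2 n3"
definition delta3 :: "nat \<Rightarrow> nat \<Rightarrow> nat \<Rightarrow> int" where
  "delta3 n1 n2 n3 = r31 n1 n2 n3 + r32 n1 n2 n3 - c3 n1 n2 n3"

definition lam :: "nat \<Rightarrow> nat \<Rightarrow> nat \<Rightarrow> int \<Rightarrow> int \<times> int" where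
  "lam n1 n2 n3 i = (THE (a, b). a * delta1 n1 n2 n3 + b * delta3 n1 n2 n3 = i
                          \<and> 0 < b \<and> b \<le> delta1 n1 n2 n3)"

definition mu :: "nat \<Rightarrow> nat \<Rightarrow> nat \<Rightarrow> int \<Rightarrow> int \<times> int" where
  "mu n1 n2 n3 i = (THE (a, b). a * delta1 n1 n2 n3 + b * delta3 n1 n2 n3 = i
                          \<and> 0 < a \<and> a \<le> delta3 n1 n2 n3)"

definition reducible :: "int \<Rightarrow> (int \<Rightarrow> int \<times> int) \<Rightarrow> int \<Rightarrow> bool" where
  "reducible M x i \<longleftrightarrow> (\<exists>j k. j \<in> {1..M} \<and> k \<in> {1..M} \<and>
      fst (x i) = fst (x j) + fst (x k) \<and> snd (x i) = snd (x j) + snd (x k))"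

definition tau :: "nat \<Rightarrow> nat \<Rightarrow> nat \<Rightarrow> int \<times> int \<Rightarrow> int \<times> int \<times> int" where
  "tau n1 n2 n3 ab = (let a = fst ab; b = snd ab in
     (a * c1 n1 n2 n3 + b * r31 n1 n2 n3,
      - a * r12 n1 n2 n3 + b * r32 n1 n2 n3,
      - a * r13 n1 n2 n3 - b * c3 n1 n2 n3))"

definition negpart :: "int \<times> int \<times> int \<Rightarrow> int \<times> int \<times> int" where
  "negpart z = (case z of (x, y, w) \<Rightarrow> (max (- x) 0, max (- y) 0, max (- w) 0))"

definition le3 :: "int \<times> int \<times> int \<Rightarrow> int \<times> int \<times> int \<Rightarrow> bool" where
  "le3 u v \<longleftrightarrow> fst u \<le> fst v \<and> fst (snd u) \<le> fst (snd v) \<and> snd (snd u) \<le> snd (snd v)"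

end

theory Submission
  imports Defs
begin

text \<open>
  For a Bezout couple \<open>(a, b)\<close> of \<open>1 \<le> m \<le> max \<delta>\<^sub>1 \<delta>\<^sub>3\<close>, the vector
  \<open>z = \<tau>(a, b)\<close> satisfies \<open>z\<^sub>1 n\<^sub>1 + z\<^sub>2 n\<^sub>2 + z\<^sub>3 n\<^sub>3 = 0\<close> and
  \<open>z\<^sub>1 + z\<^sub>2 + z\<^sub>3 = m > 0\<close>. For a \<open>\<lambda>\<close>-couple \<open>a \<le> 0 < b\<close>, so \<open>z\<^sub>2 \<ge> 0\<close>, and then
  \<open>n\<^sub>1 < n\<^sub>2 < n\<^sub>3\<close> forces \<open>z\<^sub>3 < 0\<close>; for a \<open>\<mu>\<close>-couple \<open>b \<le> 0 < a\<close>, so \<open>z\<^sub>2 \<le> 0\<close> and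
  \<open>z\<^sub>1 > 0\<close>. Thus all couples of one type have \<open>\<tau>\<close>-vectors with the same signs in two
  coordinates. If \<open>x\<^sub>i = x\<^sub>j + x\<^sub>k\<close> then \<open>i = j + k\<close> and \<open>\<tau>\<close> is additive, and in the remaining
  coordinate one of the two summands has no negative part; that summand gives \<open>l\<close>.

  The sign argument needs all \<open>r\<^sub>i\<^sub>j > 0\<close>, which is where nonsymmetry enters: if
  \<open>c\<^sub>1 n\<^sub>1\<close> were a multiple of \<open>n\<^sub>2\<close> alone, then with \<open>d = gcd n\<^sub>1 n\<^sub>2\<close> minimality of \<open>c\<^sub>1\<close>
  puts \<open>n\<^sub>3\<close> into \<open>\<langle>n\<^sub>1/d, n\<^sub>2/d\<rangle>\<close>, and \<open>S\<close> is the gluing of \<open>d\<langle>n\<^sub>1/d, n\<^sub>2/d\<rangle>\<close> and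
  \<open>\<langle>n\<^sub>3\<rangle>\<close>, hence symmetric.
\<close>

section \<open>Two-generated semigroups and gluings\<close>

lemma coprime_residue_repr:
  fixes a b x :: int
  assumes "0 < b" "coprime a b"
  obtains u v where "0 \<le> u" "u < b" "x = u*a + v*b"
proof -
  obtain s t where st: "s*a + t*b = 1"
    using bezout_int[of a b] assms(2) by (auto simp: coprime_iff_gcd_eq_1)
  define q r where "q = x*s div b" and "r = x*s mod b"
  have xs: "x*s = q*b + r"
    unfolding q_def r_def by simp
  have "x = x*(s*a + t*b)"
    using st by simp
  also have "\<dots> = (x*s)*a + (x*t)*b"
    by (simp add: algebra_simps)
  also have "\<dots> = r*a + (q*a + x*t)*b"
    unfolding xs by (simp add: algebra_simps)
  finally have "x = r*a + (q*a + x*t)*b" .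
  then show ?thesis
    using assms(1) unfolding r_def by (intro that) auto
qed

definition int_mon2 :: "int \<Rightarrow> int \<Rightarrow> int set" where
  "int_mon2 a b = {u*a + v*b | u v. 0 \<le> u \<and> 0 \<le> v}"

lemma int_mon2_complement:
  fixes a b x :: int
  assumes "0 < b" "coprime a b" "x \<notin> int_mon2 a b"
  shows "a*b - a - b - x \<in> int_mon2 a b"
proof -
  obtain u v where uv: "0 \<le> u" "u < b" "x = u*a + v*b"
    using coprime_residue_repr assms(1,2) by blast
  have "v < 0"
    using assms(3) uv unfolding int_mon2_def by (auto simp: not_less)
  have "a*b - a - b - x = (b - 1 - u)*a + (- 1 - v)*b"
    using uv(3) by (simp add: algebra_simps)
  then show ?thesis
    using uv \<open>v < 0\<close> unfolding int_mon2_def by fastforce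
qed

lemma frobenius_notin_int_mon2:
  fixes a b :: int
  assumes "0 < a" "0 < b" "coprime a b"
  shows "a*b - a - b \<notin> int_mon2 a b"
proof
  assume "a*b - a - b \<in> int_mon2 a b"
  then obtain u v where "0 \<le> u" "0 \<le> v" and uv: "(u + 1)*a + (v + 1)*b = a*b"
    unfolding int_mon2_def by (auto simp: algebra_simps)
  have "b dvd (u + 1)*a"
    using uv by (metis add_diff_cancel_right' dvd_diff dvd_triv_left dvd_triv_right mult.commute)
  then have "b dvd u + 1"
    using assms(3) by (simp add: coprime_commute coprime_dvd_mult_left_iff)
  then have "b \<le> u + 1"
    using \<open>0 \<le> u\<close> by (simp add: zdvd_imp_le)
  have "a dvd (v + 1)*b"
    using uv by (metis add_diff_cancel_left' dvd_diff dvd_triv_left dvd_triv_right)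
  then have "a dvd v + 1"
    using assms(3) by (simp add: coprime_dvd_mult_left_iff)
  then have "a \<le> v + 1"
    using \<open>0 \<le> v\<close> by (simp add: zdvd_imp_le)
  have "a*b \<le> (u + 1)*a" "a*b \<le> (v + 1)*b"
    using \<open>b \<le> u + 1\<close> \<open>a \<le> v + 1\<close> assms by (simp_all add: mult.commute mult_right_mono)
  then show False
    using uv assms by (smt (verit) mult_pos_pos)
qed

lemma mem_sgp3_iff:
  "x \<in> sgp3 g1 g2 g3 \<longleftrightarrow>
     (\<exists>\<alpha> \<beta> \<gamma> :: int. 0 \<le> \<alpha> \<and> 0 \<le> \<beta> \<and> 0 \<le> \<gamma> \<and> x = \<alpha>*int g1 + \<beta>*int g2 + \<gamma>*int g3)"
proof
  assume "x \<in> sgp3 g1 g2 g3"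
  then obtain a b c where "x = int (a*g1 + b*g2 + c*g3)"
    unfolding sgp3_def by blast
  then show "\<exists>\<alpha> \<beta> \<gamma> :: int. 0 \<le> \<alpha> \<and> 0 \<le> \<beta> \<and> 0 \<le> \<gamma> \<and> x = \<alpha>*int g1 + \<beta>*int g2 + \<gamma>*int g3"
    by (intro exI[of _ "int a"] exI[of _ "int b"] exI[of _ "int c"]) simp
next
  assume "\<exists>\<alpha> \<beta> \<gamma> :: int. 0 \<le> \<alpha> \<and> 0 \<le> \<beta> \<and> 0 \<le> \<gamma> \<and> x = \<alpha>*int g1 + \<beta>*int g2 + \<gamma>*int g3"
  then obtain \<alpha> \<beta> \<gamma> :: int where "0 \<le> \<alpha>" "0 \<le> \<beta>" "0 \<le> \<gamma>" "x = \<alpha>*int g1 + \<beta>*int g2 + \<gamma>*int g3"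
    by blast
  then have "x = int (nat \<alpha> * g1 + nat \<beta> * g2 + nat \<gamma> * g3)"
    by simp
  then show "x \<in> sgp3 g1 g2 g3"
    unfolding sgp3_def by blast
qed

lemma sgp3_swap12: "sgp3 a b c = sgp3 b a c"
  unfolding sgp3_def by (smt (verit) Collect_cong add.commute)

lemma sgp3_swap23: "sgp3 a b c = sgp3 a c b"
  unfolding sgp3_def by (smt (verit) Collect_cong add.assoc add.commute)

lemma sgp3_nonneg: "x \<in> sgp3 g1 g2 g3 \<Longrightarrow> 0 \<le> x"
  unfolding sgp3_def by auto

lemma int_mon2_add_mult:
  assumes "y \<in> int_mon2 A B" "G \<in> int_mon2 A B" "0 \<le> k"
  shows "y + k*G \<in> int_mon2 A B"
proof -
  obtain u v u' v' where "0 \<le> u" "0 \<le> v" "y = u*A + v*B" "0 \<le> u'" "0 \<le> v'" "G = u'*A + v'*B"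
    using assms(1,2) unfolding int_mon2_def by blast
  moreover have "0 \<le> u + k*u'" "0 \<le> v + k*v'"
    using assms(3) \<open>0 \<le> u\<close> \<open>0 \<le> v\<close> \<open>0 \<le> u'\<close> \<open>0 \<le> v'\<close> by simp_all
  ultimately have "y + k*G = (u + k*u')*A + (v + k*v')*B" "0 \<le> u + k*u'" "0 \<le> v + k*v'"
    by (simp_all add: algebra_simps)
  then show ?thesis
    unfolding int_mon2_def by blast
qed

definition gluing :: "int \<Rightarrow> int \<Rightarrow> int \<Rightarrow> int \<Rightarrow> int set" where
  "gluing A B D G = {D*y + \<gamma>*G | y \<gamma>. y \<in> int_mon2 A B \<and> 0 \<le> \<gamma>}"

lemma sgp3_eq_gluing: "sgp3 (d*a) (d*b) g = gluing (int a) (int b) (int d) (int g)"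
proof (rule set_eqI)
  fix x
  have "x \<in> sgp3 (d*a) (d*b) g \<longleftrightarrow>
      (\<exists>\<alpha> \<beta> \<gamma>. 0 \<le> \<alpha> \<and> 0 \<le> \<beta> \<and> 0 \<le> \<gamma> \<and> x = int d * (\<alpha> * int a + \<beta> * int b) + \<gamma> * int g)"
    unfolding mem_sgp3_iff by (simp add: algebra_simps)
  then show "x \<in> sgp3 (d*a) (d*b) g \<longleftrightarrow> x \<in> gluing (int a) (int b) (int d) (int g)"
    unfolding gluing_def int_mon2_def by auto
qed

text \<open>\<open>D (A B - A - B) + (D - 1) G\<close> is the Frobenius number of the gluing (Delorme).\<close>

lemma frobenius_notin_gluing:
  fixes A B D G :: int
  assumes "0 < A" "0 < B" "0 < D" "coprime A B" "coprime D G" "G \<in> int_mon2 A B"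
  shows "D*(A*B - A - B) + (D - 1)*G \<notin> gluing A B D G"
proof
  define f where "f = A*B - A - B"
  assume "D*f + (D - 1)*G \<in> gluing A B D G"
  then obtain y \<gamma> where y: "y \<in> int_mon2 A B" "0 \<le> \<gamma>" "D*f + (D - 1)*G = D*y + \<gamma>*G"
    unfolding gluing_def by blast
  then have eq: "(\<gamma> + 1)*G = D*(f + G - y)"
    by (simp add: algebra_simps)
  then have "D dvd (\<gamma> + 1)*G"
    by (metis dvd_triv_left)
  then have "D dvd \<gamma> + 1"
    using assms(5) by (simp add: coprime_dvd_mult_left_iff)
  then obtain m where m: "\<gamma> + 1 = D*m"
    by blast
  have "0 < D*m"
    using y(2) m by simp
  then have "0 < m"
    using assms(3) by (simp add: zero_less_mult_iff)
  have "D*(m*G) = D*(f + G - y)"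
    using eq unfolding m by (simp add: mult.assoc)
  then have "m*G = f + G - y"
    using assms(3) by simp
  then have "f = y + (m - 1)*G"
    by (simp add: algebra_simps)
  also have "\<dots> \<in> int_mon2 A B"
    using int_mon2_add_mult[OF y(1) assms(6)] \<open>0 < m\<close> by simp
  finally show False
    using frobenius_notin_int_mon2 assms(1,2,4) unfolding f_def by blast
qed

lemma frobenius_minus_gluing:
  fixes A B D G x :: int
  assumes "0 < B" "0 < D" "coprime A B" "coprime D G" "x \<notin> gluing A B D G"
  shows "D*(A*B - A - B) + (D - 1)*G - x \<in> gluing A B D G"
proof -
  obtain r y where r: "0 \<le> r" "r < D" "x = r*G + y*D"
    using coprime_residue_repr[of D G x] assms(2,4) by (metis coprime_commute)
  have "y \<notin> int_mon2 A B"
  proof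
    assume "y \<in> int_mon2 A B"
    then have "x \<in> gluing A B D G"
      unfolding gluing_def using r(1,3) by (intro CollectI exI[of _ y] exI[of _ r]) (simp add: ac_simps)
    with assms(5) show False ..
  qed
  then have "A*B - A - B - y \<in> int_mon2 A B"
    using int_mon2_complement assms(1,3) by blast
  moreover have "D*(A*B - A - B) + (D - 1)*G - x = D*(A*B - A - B - y) + (D - 1 - r)*G"
    using r(3) by (simp add: algebra_simps)
  ultimately show ?thesis
    using r(2) unfolding gluing_def by (intro CollectI exI[of _ "A*B - A - B - y"] exI[of _ "D - 1 - r"]) simp
qed

lemma symmetric_sgI:
  assumes "F \<notin> S" "\<And>x. x \<notin> S \<Longrightarrow> F - x \<in> S" "\<And>x. x \<in> S \<Longrightarrow> 0 \<le> x"
  shows "symmetric_sg S"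
proof -
  have "frob S = F"
    unfolding frob_def
  proof (rule Greatest_equality)
    fix y
    assume "y \<notin> S"
    then have "0 \<le> F - y"
      using assms(2,3) by blast
    then show "y \<le> F"
      by simp
  qed (fact assms(1))
  then show ?thesis
    using assms(2) unfolding symmetric_sg_def by simp
qed

lemma symmetric_sgp3_gluing:
  fixes a b d g :: nat
  assumes "0 < a" "0 < b" "0 < d" "coprime a b" "coprime d g" "int g \<in> int_mon2 (int a) (int b)"
  shows "symmetric_sg (sgp3 (d*a) (d*b) g)"
proof (rule symmetric_sgI)
  let ?F = "int d * (int a * int b - int a - int b) + (int d - 1) * int g"
  show "?F \<notin> sgp3 (d*a) (d*b) g"
    unfolding sgp3_eq_gluing using frobenius_notin_gluing assms by simp
  show "?F - x \<in> sgp3 (d*a) (d*b) g" if "x \<notin> sgp3 (d*a) (d*b) g" for x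
    using that unfolding sgp3_eq_gluing using frobenius_minus_gluing assms by simp
qed (rule sgp3_nonneg)

section \<open>The relations \<open>c\<^sub>i n\<^sub>i = r\<^sub>i\<^sub>j n\<^sub>j + r\<^sub>i\<^sub>k n\<^sub>k\<close>\<close>

lemma mon2_comm: "mon2 a b = mon2 b a"
  unfolding mon2_def by (metis add.commute)

lemma cc_pos_mem:
  assumes "0 < g2"
  shows "0 < cc g1 g2 g3" "cc g1 g2 g3 * g1 \<in> mon2 g2 g3"
proof -
  have "g2 * g1 = g1 * g2 + 0 * g3"
    by simp
  then have "0 < g2 \<and> g2 * g1 \<in> mon2 g2 g3"
    using assms unfolding mon2_def by blast
  then show "0 < cc g1 g2 g3" "cc g1 g2 g3 * g1 \<in> mon2 g2 g3"
    unfolding cc_def by (metis (mono_tags, lifting) LeastI)+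
qed

lemma cc_min:
  assumes "0 < c" "c < cc g1 g2 g3"
  shows "c * g1 \<notin> mon2 g2 g3"
  using assms not_less_Least unfolding cc_def by blast

lemma cc_swap23: "cc g1 g2 g3 = cc g1 g3 g2"
  unfolding cc_def by (simp add: mon2_comm)

lemma in_int_mon2_if_le_cc:
  fixes a b d g3 :: nat
  assumes "0 < b" "coprime a b" "b \<le> cc (d*a) (d*b) g3"
  shows "int g3 \<in> int_mon2 (int a) (int b)"
proof -
  obtain u v where uv: "0 \<le> u" "u < int b" "int g3 = u * int a + v * int b"
    using coprime_residue_repr[of "int b" "int a" "int g3"] assms(1,2) by auto
  have "0 \<le> v"
  proof (rule ccontr)
    assume "\<not> 0 \<le> v"
    have "u \<noteq> 0"
    proof
      assume "u = 0"
      then have "int g3 = v * int b"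
        using uv(3) by simp
      moreover have "v * int b < 0"
        using \<open>\<not> 0 \<le> v\<close> assms(1) by (simp add: mult_neg_pos)
      ultimately show False
        by simp
    qed
    with uv(1) have "0 < u"
      by simp
    have "u * int (d*a) = int d * int g3 + (- v) * int (d*b)"
      using uv(3) by (simp add: algebra_simps)
    then have "int (nat u * (d*a)) = int (nat (- v) * (d*b) + d * g3)"
      using uv(1) \<open>\<not> 0 \<le> v\<close> by simp
    then have "nat u * (d*a) \<in> mon2 (d*b) g3"
      unfolding mon2_def of_nat_eq_iff by blast
    moreover have "nat u < cc (d*a) (d*b) g3"
      using uv(1,2) assms(3) by (simp add: nat_less_iff)
    ultimately show False
      using cc_min[of "nat u" "d*a" "d*b" g3] \<open>0 < u\<close> by simp
  qed
  then show ?thesis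
    using uv unfolding int_mon2_def by blast
qed

lemma symmetric_if_cc_multiple_of_second:
  fixes g1 g2 g3 p :: nat
  assumes "0 < g1" "0 < g2" "gcd (gcd g1 g2) g3 = 1" "cc g1 g2 g3 * g1 = p * g2"
  shows "symmetric_sg (sgp3 g1 g2 g3)"
proof -
  define d where "d = gcd g1 g2"
  define a b where "a = g1 div d" and "b = g2 div d"
  have g1: "g1 = d * a" and g2: "g2 = d * b"
    unfolding a_def b_def d_def by simp_all
  have "0 < d" "0 < a" "0 < b"
    using assms(1,2) g1 g2 by simp_all
  have "coprime a b"
    unfolding a_def b_def d_def using assms(1) by (intro div_gcd_coprime) auto
  have "coprime d g3"
    using assms(3) unfolding d_def by (simp add: coprime_iff_gcd_eq_1)
  have "cc g1 g2 g3 * a = p * b"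
    using assms(4) \<open>0 < d\<close> unfolding g1 g2 by (simp add: algebra_simps)
  then have "b dvd cc g1 g2 g3"
    using \<open>coprime a b\<close> by (metis coprime_commute coprime_dvd_mult_left_iff dvd_triv_right)
  then have "b \<le> cc g1 g2 g3"
    using cc_pos_mem(1)[OF assms(2)] by (simp add: dvd_imp_le)
  then have "int g3 \<in> int_mon2 (int a) (int b)"
    using in_int_mon2_if_le_cc \<open>0 < b\<close> \<open>coprime a b\<close> unfolding g1 g2 by blast
  then show ?thesis
    using symmetric_sgp3_gluing \<open>0 < d\<close> \<open>0 < a\<close> \<open>0 < b\<close> \<open>coprime a b\<close> \<open>coprime d g3\<close>
    unfolding g1 g2 by blast
qed

definition nonsymmetric_triple :: "nat \<Rightarrow> nat \<Rightarrow> nat \<Rightarrow> bool" where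
  "nonsymmetric_triple g1 g2 g3 \<longleftrightarrow>
     0 < g1 \<and> 0 < g2 \<and> 0 < g3 \<and> gcd (gcd g1 g2) g3 = 1 \<and> \<not> symmetric_sg (sgp3 g1 g2 g3)"

lemma nonsymmetric_triple_swap12: "nonsymmetric_triple g1 g2 g3 \<longleftrightarrow> nonsymmetric_triple g2 g1 g3"
  unfolding nonsymmetric_triple_def sgp3_swap12[of g1 g2 g3] gcd.commute[of g1 g2] by blast

lemma nonsymmetric_triple_swap23: "nonsymmetric_triple g1 g2 g3 \<longleftrightarrow> nonsymmetric_triple g1 g3 g2"
  unfolding nonsymmetric_triple_def sgp3_swap23[of g1 g2 g3] by (metis gcd.assoc gcd.commute)

lemma cc_relation_coeffs_pos:
  assumes "nonsymmetric_triple g1 g2 g3" "cc g1 g2 g3 * g1 = p * g2 + q * g3"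
  shows "0 < p" "0 < q"
proof -
  have "0 < g1" "0 < g2" "0 < g3" and gcd: "gcd (gcd g1 g2) g3 = 1"
    and nonsym: "\<not> symmetric_sg (sgp3 g1 g2 g3)"
    using assms(1) unfolding nonsymmetric_triple_def by simp_all
  show "0 < q"
  proof (rule ccontr)
    assume "\<not> 0 < q"
    then have "cc g1 g2 g3 * g1 = p * g2"
      using assms(2) by simp
    then have "symmetric_sg (sgp3 g1 g2 g3)"
      by (rule symmetric_if_cc_multiple_of_second[OF \<open>0 < g1\<close> \<open>0 < g2\<close> gcd])
    with nonsym show False ..
  qed
  show "0 < p"
  proof (rule ccontr)
    assume "\<not> 0 < p"
    then have "cc g1 g3 g2 * g1 = q * g3"
      using assms(2) by (simp add: cc_swap23)
    moreover have "gcd (gcd g1 g3) g2 = 1"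
      using gcd by (simp add: ac_simps)
    ultimately have "symmetric_sg (sgp3 g1 g3 g2)"
      by (intro symmetric_if_cc_multiple_of_second[OF \<open>0 < g1\<close> \<open>0 < g3\<close>])
    with nonsym show False
      by (simp add: sgp3_swap23[of g1 g2])
  qed
qed

text \<open>If \<open>p \<ge> c\<^sub>2\<close>, trading \<open>c\<^sub>2 g\<^sub>2\<close> for its representation \<open>r g\<^sub>1 + s g\<^sub>3\<close> yields a smaller
  positive multiple \<open>(c\<^sub>1 - r) g\<^sub>1\<close> in \<open>\<langle>g\<^sub>2, g\<^sub>3\<rangle>\<close>.\<close>

lemma cc_relation_coeff_lt_cc:
  assumes "nonsymmetric_triple g1 g2 g3" "cc g1 g2 g3 * g1 = p * g2 + q * g3"
  shows "p < cc g2 g1 g3"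
proof (rule ccontr)
  assume "\<not> p < cc g2 g1 g3"
  define c c' where "c = cc g1 g2 g3" and "c' = cc g2 g1 g3"
  have "0 < g1" "0 < g3"
    using assms(1) unfolding nonsymmetric_triple_def by simp_all
  obtain r s where rs: "c' * g2 = r * g1 + s * g3"
    using cc_pos_mem(2)[OF \<open>0 < g1\<close>, of g2 g3] unfolding c'_def mon2_def by blast
  have "0 < r" "0 < s"
    using cc_relation_coeffs_pos assms(1) rs unfolding c'_def nonsymmetric_triple_swap12[of g1] by blast+
  have "p * g2 = (p - c') * g2 + c' * g2"
    using \<open>\<not> p < cc g2 g1 g3\<close> unfolding c'_def by (simp add: add_mult_distrib[symmetric])
  then have eq: "c * g1 = (p - c') * g2 + (s + q) * g3 + r * g1"
    using assms(2) rs unfolding c_def by (simp add: algebra_simps)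
  moreover have "0 < (s + q) * g3"
    using \<open>0 < s\<close> \<open>0 < g3\<close> by simp
  ultimately have "r * g1 < c * g1"
    by linarith
  then have "r < c"
    by simp
  then have "(c - r) * g1 = (p - c') * g2 + (s + q) * g3"
    using eq by (simp add: diff_mult_distrib)
  then have "(c - r) * g1 \<in> mon2 g2 g3"
    unfolding mon2_def by blast
  with \<open>0 < r\<close> \<open>r < c\<close> show False
    using cc_min[of "c - r" g1 g2 g3] unfolding c_def by simp
qed

lemma cc_relation_unique:
  assumes "nonsymmetric_triple g1 g2 g3"
    and "cc g1 g2 g3 * g1 = p * g2 + q * g3" "cc g1 g2 g3 * g1 = p' * g2 + q' * g3"
  shows "p = p'" "q = q'"
proof -
  have "0 < g2" "0 < g3"
    using assms(1) unfolding nonsymmetric_triple_def by simp_all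
  have no_smaller: False
    if "cc g1 g2 g3 * g1 = x * g2 + y * g3" "cc g1 g2 g3 * g1 = x' * g2 + y' * g3" "x < x'"
    for x y x' y'
  proof -
    have eq: "(x' - x) * g2 + y' * g3 = y * g3"
      using that by (simp add: diff_mult_distrib)
    moreover have "0 < (x' - x) * g2"
      using that(3) \<open>0 < g2\<close> by simp
    ultimately have "y' < y"
      by (metis add_less_cancel_right less_add_same_cancel2 mult_less_cancel2)
    then have "(x' - x) * g2 = 0 * g1 + (y - y') * g3"
      using eq by (simp add: diff_mult_distrib)
    then have "(x' - x) * g2 \<in> mon2 g1 g3"
      unfolding mon2_def by blast
    moreover have "x' < cc g2 g1 g3"
      using cc_relation_coeff_lt_cc[OF assms(1) that(2)] .
    ultimately show False
      using cc_min[of "x' - x" g2 g1 g3] that(3) by simp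
  qed
  show "p = p'"
    using no_smaller[OF assms(2,3)] no_smaller[OF assms(3,2)] by (meson linorder_neqE_nat)
  then show "q = q'"
    using assms(2,3) \<open>0 < g3\<close> by simp
qed

lemma rr_props:
  assumes "nonsymmetric_triple g1 g2 g3"
  shows "0 < fst (rr g1 g2 g3)" "0 < snd (rr g1 g2 g3)"
    "cc g1 g2 g3 * g1 = fst (rr g1 g2 g3) * g2 + snd (rr g1 g2 g3) * g3"
proof -
  have "0 < g2"
    using assms unfolding nonsymmetric_triple_def by simp
  then obtain p q where pq: "cc g1 g2 g3 * g1 = p * g2 + q * g3"
    using cc_pos_mem(2) unfolding mon2_def by blast
  have "\<exists>!pq. case pq of (p, q) \<Rightarrow> 0 < p \<and> 0 < q \<and> cc g1 g2 g3 * g1 = p * g2 + q * g3"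
  proof (rule ex1I[of _ "(p, q)"])
    show "case (p, q) of (p, q) \<Rightarrow> 0 < p \<and> 0 < q \<and> cc g1 g2 g3 * g1 = p * g2 + q * g3"
      using pq cc_relation_coeffs_pos[OF assms pq] by simp
  next
    fix pq' :: "nat \<times> nat"
    assume "case pq' of (p, q) \<Rightarrow> 0 < p \<and> 0 < q \<and> cc g1 g2 g3 * g1 = p * g2 + q * g3"
    then show "pq' = (p, q)"
      using cc_relation_unique[OF assms pq] by (cases pq') auto
  qed
  then have "case rr g1 g2 g3 of (p, q) \<Rightarrow> 0 < p \<and> 0 < q \<and> cc g1 g2 g3 * g1 = p * g2 + q * g3"
    unfolding rr_def by (rule theI')
  then show "0 < fst (rr g1 g2 g3)" "0 < snd (rr g1 g2 g3)"
    "cc g1 g2 g3 * g1 = fst (rr g1 g2 g3) * g2 + snd (rr g1 g2 g3) * g3"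
    by (simp_all split: prod.splits)
qed

section \<open>Bezout couples\<close>

lemma bezout_couple_exists:
  fixes D1 D3 i :: int
  assumes "0 < D1" "coprime D1 D3"
  obtains a b where "a * D1 + b * D3 = i" "0 < b" "b \<le> D1"
proof -
  obtain u v where "0 \<le> u" "u < D1" "i - D3 = u * D3 + v * D1"
    using coprime_residue_repr[of D1 D3 "i - D3"] assms by (auto simp: coprime_commute)
  then show ?thesis
    by (intro that[of v "u + 1"]) (simp_all add: algebra_simps)
qed

lemma bezout_couple_unique:
  fixes D1 D3 a b a' b' :: int
  assumes "0 < D1" "coprime D1 D3" "a * D1 + b * D3 = a' * D1 + b' * D3"
    and "0 < b" "b \<le> D1" "0 < b'" "b' \<le> D1"
  shows "a = a'" "b = b'"
proof -
  have "(b - b') * D3 = (a' - a) * D1"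
    using assms(3) by (simp add: algebra_simps)
  then have "D1 dvd (b - b') * D3"
    by simp
  then have dvd: "D1 dvd b - b'"
    using assms(2) by (simp add: coprime_dvd_mult_left_iff)
  show "b = b'"
  proof (rule ccontr)
    assume "b \<noteq> b'"
    then have "\<bar>D1\<bar> \<le> \<bar>b - b'\<bar>"
      using dvd_imp_le_int[OF _ dvd] by simp
    with assms(1,4-7) show False
      by linarith
  qed
  then show "a = a'"
    using assms(1,3) by simp
qed

lemma lam_props:
  assumes "0 < delta1 n1 n2 n3" "coprime (delta1 n1 n2 n3) (delta3 n1 n2 n3)"
  shows "fst (lam n1 n2 n3 i) * delta1 n1 n2 n3 + snd (lam n1 n2 n3 i) * delta3 n1 n2 n3 = i"
    "0 < snd (lam n1 n2 n3 i)" "snd (lam n1 n2 n3 i) \<le> delta1 n1 n2 n3"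
proof -
  define D1 D3 where "D1 = delta1 n1 n2 n3" and "D3 = delta3 n1 n2 n3"
  have "0 < D1" "coprime D1 D3"
    using assms unfolding D1_def D3_def by simp_all
  obtain a b where ab: "a * D1 + b * D3 = i" "0 < b" "b \<le> D1"
    using bezout_couple_exists \<open>0 < D1\<close> \<open>coprime D1 D3\<close> by blast
  have "\<exists>!p. case p of (a, b) \<Rightarrow> a * D1 + b * D3 = i \<and> 0 < b \<and> b \<le> D1"
  proof (rule ex1I[of _ "(a, b)"])
    fix p :: "int \<times> int"
    assume "case p of (a, b) \<Rightarrow> a * D1 + b * D3 = i \<and> 0 < b \<and> b \<le> D1"
    moreover obtain u v where "p = (u, v)"
      by (cases p)
    ultimately have "u * D1 + v * D3 = a * D1 + b * D3" "0 < v" "v \<le> D1"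
      using ab by simp_all
    from bezout_couple_unique[OF \<open>0 < D1\<close> \<open>coprime D1 D3\<close> this ab(2,3)]
    show "p = (a, b)"
      using \<open>p = (u, v)\<close> by simp
  qed (use ab in simp)
  then have "case lam n1 n2 n3 i of (a, b) \<Rightarrow> a * D1 + b * D3 = i \<and> 0 < b \<and> b \<le> D1"
    unfolding lam_def D1_def D3_def by (rule theI')
  then show "fst (lam n1 n2 n3 i) * delta1 n1 n2 n3 + snd (lam n1 n2 n3 i) * delta3 n1 n2 n3 = i"
    "0 < snd (lam n1 n2 n3 i)" "snd (lam n1 n2 n3 i) \<le> delta1 n1 n2 n3"
    unfolding D1_def D3_def by (simp_all split: prod.splits)
qed

lemma mu_props:
  assumes "0 < delta3 n1 n2 n3" "coprime (delta1 n1 n2 n3) (delta3 n1 n2 n3)"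
  shows "fst (mu n1 n2 n3 i) * delta1 n1 n2 n3 + snd (mu n1 n2 n3 i) * delta3 n1 n2 n3 = i"
    "0 < fst (mu n1 n2 n3 i)" "fst (mu n1 n2 n3 i) \<le> delta3 n1 n2 n3"
proof -
  define D1 D3 where "D1 = delta1 n1 n2 n3" and "D3 = delta3 n1 n2 n3"
  have "0 < D3" "coprime D3 D1"
    using assms unfolding D1_def D3_def by (simp_all add: coprime_commute)
  obtain b a where ab: "b * D3 + a * D1 = i" "0 < a" "a \<le> D3"
    using bezout_couple_exists \<open>0 < D3\<close> \<open>coprime D3 D1\<close> by blast
  have "\<exists>!p. case p of (a, b) \<Rightarrow> a * D1 + b * D3 = i \<and> 0 < a \<and> a \<le> D3"
  proof (rule ex1I[of _ "(a, b)"])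
    fix p :: "int \<times> int"
    assume "case p of (a, b) \<Rightarrow> a * D1 + b * D3 = i \<and> 0 < a \<and> a \<le> D3"
    moreover obtain u v where "p = (u, v)"
      by (cases p)
    ultimately have "v * D3 + u * D1 = b * D3 + a * D1" "0 < u" "u \<le> D3"
      using ab(1) by (simp_all add: add.commute)
    from bezout_couple_unique[OF \<open>0 < D3\<close> \<open>coprime D3 D1\<close> this ab(2,3)]
    show "p = (a, b)"
      using \<open>p = (u, v)\<close> by simp
  qed (use ab in \<open>simp add: add.commute\<close>)
  then have "case mu n1 n2 n3 i of (a, b) \<Rightarrow> a * D1 + b * D3 = i \<and> 0 < a \<and> a \<le> D3"
    unfolding mu_def D1_def D3_def by (rule theI')
  then show "fst (mu n1 n2 n3 i) * delta1 n1 n2 n3 + snd (mu n1 n2 n3 i) * delta3 n1 n2 n3 = i"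
    "0 < fst (mu n1 n2 n3 i)" "fst (mu n1 n2 n3 i) \<le> delta3 n1 n2 n3"
    unfolding D1_def D3_def by (simp_all split: prod.splits)
qed

section \<open>Sign pattern of \<open>\<tau>\<close>\<close>

lemma bezout_couple_nonpos_coeff:
  fixes a b D1 D3 :: int
  assumes "0 < D1" "0 < D3" "0 < b" "a * D1 + b * D3 \<le> max D1 D3"
  shows "a \<le> 0"
proof (rule ccontr)
  assume "\<not> a \<le> 0"
  then have "D1 \<le> a * D1" "D3 \<le> b * D3"
    using assms(1-3) by simp_all
  with assms show False
    by linarith
qed

lemma relation_signs:
  fixes z1 z2 z3 N1 N2 N3 :: int
  assumes "0 < N1" "N1 \<le> N2" "N2 \<le> N3"
    and "z1 * N1 + z2 * N2 + z3 * N3 = 0" "0 < z1 + z2 + z3"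
  shows "0 \<le> z2 \<Longrightarrow> z3 < 0" "z2 \<le> 0 \<Longrightarrow> 0 < z1"
proof -
  show "z3 < 0" if "0 \<le> z2"
  proof (rule ccontr)
    assume "\<not> z3 < 0"
    then have "z2 * N1 \<le> z2 * N2" "z3 * N1 \<le> z3 * N3"
      using that assms(2,3) by (simp_all add: mult_left_mono)
    moreover have "0 < (z1 + z2 + z3) * N1"
      using assms(1,5) by simp
    ultimately show False
      using assms(4) by (simp add: algebra_simps)
  qed
  show "0 < z1" if "z2 \<le> 0"
  proof (rule ccontr)
    assume "\<not> 0 < z1"
    then have "z2 * N3 \<le> z2 * N2" "z1 * N3 \<le> z1 * N1"
      using that assms(1-3) by (simp_all add: mult_left_mono_neg)
    moreover have "0 < (z1 + z2 + z3) * N3"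
      using assms(1-3,5) by simp
    ultimately show False
      using assms(4) by (simp add: algebra_simps)
  qed
qed

lemma le3_negpart_of_summand:
  fixes u1 u2 u3 v1 v2 v3 :: int
  assumes "(0 \<le> u2 \<and> 0 \<le> v2 \<and> u3 \<le> 0 \<and> v3 \<le> 0) \<or> (0 \<le> u1 \<and> 0 \<le> v1 \<and> u2 \<le> 0 \<and> v2 \<le> 0)"
  shows "le3 (negpart (u1, u2, u3)) (negpart (u1 + v1, u2 + v2, u3 + v3))
    \<or> le3 (negpart (v1, v2, v3)) (negpart (u1 + v1, u2 + v2, u3 + v3))"
  using assms unfolding le3_def negpart_def by auto

lemma tau_add:
  assumes "tau n1 n2 n3 (a, b) = (u1, u2, u3)" "tau n1 n2 n3 (a', b') = (v1, v2, v3)"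
  shows "tau n1 n2 n3 (a + a', b + b') = (u1 + v1, u2 + v2, u3 + v3)"
  using assms unfolding tau_def by (auto simp: algebra_simps)

lemma tau_component_sum:
  assumes "tau n1 n2 n3 (a, b) = (z1, z2, z3)"
  shows "z1 + z2 + z3 = a * delta1 n1 n2 n3 + b * delta3 n1 n2 n3"
  using assms unfolding tau_def delta1_def delta3_def by (auto simp: algebra_simps)

locale ordered_nonsymmetric_triple =
  fixes n1 n2 n3 :: nat
  assumes ordered: "n1 < n2" "n2 < n3"
    and nonsymmetric: "nonsymmetric_triple n1 n2 n3"
begin

lemma n1_pos: "0 < n1"
  using nonsymmetric unfolding nonsymmetric_triple_def by simp

lemma c1_relation: "c1 n1 n2 n3 * int n1 = r12 n1 n2 n3 * int n2 + r13 n1 n2 n3 * int n3"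
  using arg_cong[OF rr_props(3)[OF nonsymmetric], of int] unfolding c1_def r12_def r13_def by simp

lemma c3_relation: "c3 n1 n2 n3 * int n3 = r31 n1 n2 n3 * int n1 + r32 n1 n2 n3 * int n2"
proof -
  have "nonsymmetric_triple n3 n1 n2"
    using nonsymmetric nonsymmetric_triple_swap12 nonsymmetric_triple_swap23 by blast
  from arg_cong[OF rr_props(3)[OF this], of int] show ?thesis
    unfolding c3_def r31_def r32_def by simp
qed

lemma r_pos: "0 < r12 n1 n2 n3" "0 < r13 n1 n2 n3" "0 < r31 n1 n2 n3" "0 < r32 n1 n2 n3"
proof -
  have "nonsymmetric_triple n3 n1 n2"
    using nonsymmetric nonsymmetric_triple_swap12 nonsymmetric_triple_swap23 by blast
  then show "0 < r12 n1 n2 n3" "0 < r13 n1 n2 n3" "0 < r31 n1 n2 n3" "0 < r32 n1 n2 n3"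
    using rr_props(1,2) nonsymmetric unfolding r12_def r13_def r31_def r32_def by simp_all
qed

lemma delta1_pos: "0 < delta1 n1 n2 n3"
proof -
  have "delta1 n1 n2 n3 * int n1 = r12 n1 n2 n3 * (int n2 - int n1) + r13 n1 n2 n3 * (int n3 - int n1)"
    using c1_relation unfolding delta1_def by (simp add: algebra_simps)
  also have "\<dots> > 0"
    using r_pos ordered by (simp add: add_pos_pos)
  finally show ?thesis
    using n1_pos by (simp add: zero_less_mult_iff)
qed

lemma delta3_pos: "0 < delta3 n1 n2 n3"
proof -
  have "delta3 n1 n2 n3 * int n3 = r31 n1 n2 n3 * (int n3 - int n1) + r32 n1 n2 n3 * (int n3 - int n2)"
    using c3_relation unfolding delta3_def by (simp add: algebra_simps)
  also have "\<dots> > 0"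
    using r_pos ordered by (simp add: add_pos_pos)
  finally show ?thesis
    using ordered n1_pos by (simp add: zero_less_mult_iff)
qed

lemma tau_relation:
  assumes "tau n1 n2 n3 (a, b) = (z1, z2, z3)"
  shows "z1 * int n1 + z2 * int n2 + z3 * int n3 = 0"
proof -
  have z: "z1 = a * c1 n1 n2 n3 + b * r31 n1 n2 n3" "z2 = - a * r12 n1 n2 n3 + b * r32 n1 n2 n3"
    "z3 = - a * r13 n1 n2 n3 - b * c3 n1 n2 n3"
    using assms unfolding tau_def by auto
  have "z1 * int n1 + z2 * int n2 + z3 * int n3
      = a * (c1 n1 n2 n3 * int n1 - r12 n1 n2 n3 * int n2 - r13 n1 n2 n3 * int n3)
        + b * (r31 n1 n2 n3 * int n1 + r32 n1 n2 n3 * int n2 - c3 n1 n2 n3 * int n3)"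
    unfolding z by (simp add: algebra_simps)
  then show ?thesis
    using c1_relation c3_relation by simp
qed

lemma tau_lam_signs:
  assumes "coprime (delta1 n1 n2 n3) (delta3 n1 n2 n3)"
    and "1 \<le> m" "m \<le> max (delta1 n1 n2 n3) (delta3 n1 n2 n3)"
    and "tau n1 n2 n3 (lam n1 n2 n3 m) = (z1, z2, z3)"
  shows "0 \<le> z2" "z3 \<le> 0"
proof -
  obtain a b where ab: "lam n1 n2 n3 m = (a, b)"
    by (cases "lam n1 n2 n3 m")
  have "a * delta1 n1 n2 n3 + b * delta3 n1 n2 n3 = m" "0 < b"
    using lam_props[OF delta1_pos assms(1), of m] ab by simp_all
  then have "a \<le> 0"
    using bezout_couple_nonpos_coeff delta1_pos delta3_pos assms(3) by simp
  have tau_ab: "tau n1 n2 n3 (a, b) = (z1, z2, z3)"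
    using assms(4) ab by simp
  then have "z2 = - a * r12 n1 n2 n3 + b * r32 n1 n2 n3"
    unfolding tau_def by auto
  then show "0 \<le> z2"
    using mult_nonpos_nonneg[OF \<open>a \<le> 0\<close>, of "r12 n1 n2 n3"] mult_pos_pos[OF \<open>0 < b\<close> r_pos(4)] r_pos
    by simp
  moreover have "0 < z1 + z2 + z3"
    using tau_component_sum[OF tau_ab] \<open>a * delta1 n1 n2 n3 + b * delta3 n1 n2 n3 = m\<close> assms(2)
    by simp
  ultimately show "z3 \<le> 0"
    using relation_signs(1)[OF _ _ _ tau_relation[OF tau_ab]] n1_pos ordered by simp
qed

lemma tau_mu_signs:
  assumes "coprime (delta1 n1 n2 n3) (delta3 n1 n2 n3)"
    and "1 \<le> m" "m \<le> max (delta1 n1 n2 n3) (delta3 n1 n2 n3)"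
    and "tau n1 n2 n3 (mu n1 n2 n3 m) = (z1, z2, z3)"
  shows "0 \<le> z1" "z2 \<le> 0"
proof -
  obtain a b where ab: "mu n1 n2 n3 m = (a, b)"
    by (cases "mu n1 n2 n3 m")
  have "b * delta3 n1 n2 n3 + a * delta1 n1 n2 n3 = m" "0 < a"
    using mu_props[OF delta3_pos assms(1), of m] ab by simp_all
  then have "b \<le> 0"
    using bezout_couple_nonpos_coeff delta1_pos delta3_pos assms(3) by (simp add: max.commute)
  have tau_ab: "tau n1 n2 n3 (a, b) = (z1, z2, z3)"
    using assms(4) ab by simp
  then have "z2 = - a * r12 n1 n2 n3 + b * r32 n1 n2 n3"
    unfolding tau_def by auto
  then show "z2 \<le> 0"
    using mult_nonpos_nonneg[OF \<open>b \<le> 0\<close>, of "r32 n1 n2 n3"] mult_pos_pos[OF \<open>0 < a\<close> r_pos(1)] r_pos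
    by simp
  moreover have "0 < z1 + z2 + z3"
    using tau_component_sum[OF tau_ab] \<open>b * delta3 n1 n2 n3 + a * delta1 n1 n2 n3 = m\<close> assms(2)
    by simp
  ultimately show "0 \<le> z1"
    using relation_signs(2)[OF _ _ _ tau_relation[OF tau_ab]] n1_pos ordered by simp
qed

abbreviation max_delta :: int where
  "max_delta \<equiv> max (delta1 n1 n2 n3) (delta3 n1 n2 n3)"

lemma bezout_couple_identity:
  assumes "coprime (delta1 n1 n2 n3) (delta3 n1 n2 n3)" "x \<in> {lam n1 n2 n3, mu n1 n2 n3}"
  shows "fst (x m) * delta1 n1 n2 n3 + snd (x m) * delta3 n1 n2 n3 = m"
  using assms lam_props(1)[OF delta1_pos] mu_props(1)[OF delta3_pos] by auto

lemma reducible_couple_split: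
  assumes "coprime (delta1 n1 n2 n3) (delta3 n1 n2 n3)" "x \<in> {lam n1 n2 n3, mu n1 n2 n3}"
    and "reducible max_delta x i"
  obtains j k where "j \<in> {1..max_delta}" "k \<in> {1..max_delta}" "j < i" "k < i"
    "x i = (fst (x j) + fst (x k), snd (x j) + snd (x k))"
proof -
  obtain j k where jk: "j \<in> {1..max_delta}" "k \<in> {1..max_delta}"
    and x_i: "x i = (fst (x j) + fst (x k), snd (x j) + snd (x k))"
    using assms(3) unfolding reducible_def by (auto simp: prod_eq_iff)
  note identity = bezout_couple_identity[OF assms(1,2)]
  have "i = (fst (x j) + fst (x k)) * delta1 n1 n2 n3 + (snd (x j) + snd (x k)) * delta3 n1 n2 n3"
    using identity[of i] x_i by simp
  also have "\<dots> = (fst (x j) * delta1 n1 n2 n3 + snd (x j) * delta3 n1 n2 n3)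
      + (fst (x k) * delta1 n1 n2 n3 + snd (x k) * delta3 n1 n2 n3)"
    by (simp add: algebra_simps)
  also have "\<dots> = j + k"
    unfolding identity ..
  finally have "i = j + k" .
  with jk x_i show ?thesis
    by (intro that) auto
qed

lemma bezout_couples_tau_signs:
  assumes "coprime (delta1 n1 n2 n3) (delta3 n1 n2 n3)" "x \<in> {lam n1 n2 n3, mu n1 n2 n3}"
    and "j \<in> {1..max_delta}" "k \<in> {1..max_delta}"
    and "tau n1 n2 n3 (x j) = (u1, u2, u3)" "tau n1 n2 n3 (x k) = (v1, v2, v3)"
  shows "(0 \<le> u2 \<and> 0 \<le> v2 \<and> u3 \<le> 0 \<and> v3 \<le> 0) \<or> (0 \<le> u1 \<and> 0 \<le> v1 \<and> u2 \<le> 0 \<and> v2 \<le> 0)"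
proof (cases "x = lam n1 n2 n3")
  case True
  then show ?thesis
    using tau_lam_signs[OF assms(1) _ _ assms(5)[unfolded True]]
      tau_lam_signs[OF assms(1) _ _ assms(6)[unfolded True]] assms(3,4)
    by auto
next
  case False
  then have mu: "x = mu n1 n2 n3"
    using assms(2) by simp
  then show ?thesis
    using tau_mu_signs[OF assms(1) _ _ assms(5)[unfolded mu]]
      tau_mu_signs[OF assms(1) _ _ assms(6)[unfolded mu]] assms(3,4)
    by auto
qed

end

theorem lemma2p13:
  fixes n1 n2 n3 :: nat and x :: "int \<Rightarrow> int \<times> int" and i :: int
  assumes "0 < n1" and "n1 < n2" and "n2 < n3"
    and "gcd (gcd n1 n2) n3 = 1"
    and "min_generated n1 n2 n3"
    and "\<not> symmetric_sg (sgp3 n1 n2 n3)"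
    and "gcd (delta1 n1 n2 n3) (delta3 n1 n2 n3) = 1"
    and "x \<in> {lam n1 n2 n3, mu n1 n2 n3}"
    and "1 \<le> i" and "i \<le> max (delta1 n1 n2 n3) (delta3 n1 n2 n3)"
    and "reducible (max (delta1 n1 n2 n3) (delta3 n1 n2 n3)) x i"
  shows "\<exists>l. 0 < l \<and> l < i \<and>
           le3 (negpart (tau n1 n2 n3 (x l))) (negpart (tau n1 n2 n3 (x i)))"
proof -
  interpret ordered_nonsymmetric_triple n1 n2 n3
    using assms(1-4,6) by unfold_locales (simp_all add: nonsymmetric_triple_def)
  have cop: "coprime (delta1 n1 n2 n3) (delta3 n1 n2 n3)"
    using assms(7) by (simp add: coprime_iff_gcd_eq_1)
  obtain j k where jk: "j \<in> {1..max_delta}" "k \<in> {1..max_delta}" "j < i" "k < i"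
    and x_i: "x i = (fst (x j) + fst (x k), snd (x j) + snd (x k))"
    using reducible_couple_split[OF cop assms(8,11)] .
  obtain u1 u2 u3 v1 v2 v3 where u: "tau n1 n2 n3 (x j) = (u1, u2, u3)"
    and v: "tau n1 n2 n3 (x k) = (v1, v2, v3)"
    by (metis prod_cases3)
  have tau_i: "tau n1 n2 n3 (x i) = (u1 + v1, u2 + v2, u3 + v3)"
    using tau_add[of n1 n2 n3 "fst (x j)" "snd (x j)" u1 u2 u3 "fst (x k)" "snd (x k)"] u v x_i
    by simp
  have "le3 (negpart (tau n1 n2 n3 (x j))) (negpart (tau n1 n2 n3 (x i)))
    \<or> le3 (negpart (tau n1 n2 n3 (x k))) (negpart (tau n1 n2 n3 (x i)))"
    unfolding tau_i u v
    by (rule le3_negpart_of_summand[OF bezout_couples_tau_signs[OF cop assms(8) jk(1,2) u v]])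
  moreover have "0 < j" "0 < k"
    using jk(1,2) by simp_all
  ultimately show ?thesis
    using jk(3,4) by blast
qed

end
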